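(* Let $g:\overline D\to\mathbb{C}$ be smooth with $g|_D$ analytic and $|g|>0$ on $\overline D$. Then for any $\varepsilon_0>0$ and $k>0$ there exist $M>0$, $\alpha_0\in\mathbb{C}$, and pairs $(\alpha_i,N_i)$, $i=1,\dots,M$, with $\alpha_i\in\mathbb{C}$, $|\alpha_i|>1$ and $N_i\ge1$ integers, such that $$\Big\|g-\alpha_0\prod_{i=1}^M(z-\alpha_i)^{2N_i}\Big\|_{C^k(\overline D)}<\varepsilon_0.$$
   Context: $D=\{z\in\mathbb{C}:|z|<1\}$ is the open unit disc and $\overline D$ its closure. *)

theory Defs
  imports "HOL-Complex_Analysis.Complex_Analysis"
begin

text \<open>Real directional derivative of f at z in direction v, taken within the set S
  (S will be the closed unit disc, so boundary points are handled one-sidedly).\<close>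
definition dderiv :: "complex \<Rightarrow> complex set \<Rightarrow> (complex \<Rightarrow> complex) \<Rightarrow> complex \<Rightarrow> complex" where
  "dderiv v S f z = frechet_derivative f (at z within S) v"

text \<open>Iterated directional derivatives; directions 1 and i give the partials in x and y.\<close>
fun iter_pd :: "complex list \<Rightarrow> complex set \<Rightarrow> (complex \<Rightarrow> complex) \<Rightarrow> complex \<Rightarrow> complex" where
  "iter_pd [] S f = f"
| "iter_pd (v # ds) S f = dderiv v S (iter_pd ds S f)"

definition smooth_on_set :: "complex set \<Rightarrow> (complex \<Rightarrow> complex) \<Rightarrow> bool" where
  "smooth_on_set S f \<longleftrightarrow>
     (\<forall>ds. set ds \<subseteq> {1, \<i>} \<longrightarrow> (\<forall>z\<in>S. iter_pd ds S f differentiable (at z within S)))"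

definition Ck_norm :: "nat \<Rightarrow> complex set \<Rightarrow> (complex \<Rightarrow> complex) \<Rightarrow> real" where
  "Ck_norm k S f = (\<Sum>(a, b) \<in> {(a, b). a + b \<le> k}.
      (SUP z\<in>S. norm (iter_pd (replicate a 1 @ replicate b \<i>) S f z)))"

end

theory Submission
  imports Defs "HOL-Computational_Algebra.Fundamental_Theorem_Algebra"
begin

text \<open>
  The C^k norm involves only real partial derivatives; on the open disc these are unimodular
  multiples of complex derivatives, and they extend continuously to the closed disc. So it
  suffices to approximate the complex derivatives of order at most k uniformly on D.
  The dilations g(r z), r close to 1, do this by uniform continuity of those extensions, and they
  are holomorphic and zero-free on the larger disc of radius 1/r, where they have a holomorphic
  square root s. A Taylor polynomial q of s, made nonconstant by a tiny extra monomial,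
  approximates s uniformly on a closed disc of radius greater than 1; hence q^2 approximates the
  dilation there, and Cauchy's estimates yield closeness of derivatives on D. Since q has no zeros
  in the closed unit disc, factoring q over its roots puts q^2 in the required form, with all
  exponents N i = 1.
\<close>

text \<open>Along each segment into S this is the one-dimensional uniqueness on an interval; a ball
  inside S then forces the two linear maps to agree everywhere.\<close>

lemma has_derivative_within_convex_unique:
  fixes f :: "'a::real_normed_vector \<Rightarrow> 'b::real_normed_vector"
  assumes S: "convex S" "interior S \<noteq> {}" and x: "x \<in> S"
    and f1: "(f has_derivative f1) (at x within S)"
    and f2: "(f has_derivative f2) (at x within S)"
  shows "f1 = f2"
proof -
  interpret l1: bounded_linear f1 using f1 by (rule has_derivative_bounded_linear)
  interpret l2: bounded_linear f2 using f2 by (rule has_derivative_bounded_linear)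
  have on_S: "f1 (w - x) = f2 (w - x)" if w: "w \<in> S" for w
  proof -
    let ?seg = "\<lambda>t::real. x + t *\<^sub>R (w - x)"
    have seg: "(?seg has_derivative (\<lambda>t. t *\<^sub>R (w - x))) (at 0 within {0..1})"
      by (auto intro!: derivative_eq_intros)
    have sub: "?seg ` {0..1} \<subseteq> S"
      using convexD_alt[OF S(1) x w] by (auto simp: algebra_simps)
    have "((f \<circ> ?seg) has_derivative f1 \<circ> (\<lambda>t. t *\<^sub>R (w - x))) (at 0 within {0..1})"
      by (rule diff_chain_within[OF seg]) (use has_derivative_subset[OF f1 sub] in simp)
    moreover have "((f \<circ> ?seg) has_derivative f2 \<circ> (\<lambda>t. t *\<^sub>R (w - x))) (at 0 within {0..1})"
      by (rule diff_chain_within[OF seg]) (use has_derivative_subset[OF f2 sub] in simp)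
    ultimately
    have "f1 \<circ> (\<lambda>t. t *\<^sub>R (w - x)) = f2 \<circ> (\<lambda>t. t *\<^sub>R (w - x))"
      using frechet_derivative_unique_within_closed_interval[of 0 1 0 "f \<circ> ?seg"]
      by (simp add: cbox_interval)
    then show ?thesis by (metis comp_apply scaleR_one)
  qed
  obtain c e where e: "e > 0" "ball c e \<subseteq> S"
    using S(2) by (auto simp: mem_interior)
  show ?thesis
  proof
    fix v :: 'a
    define n where "n = norm v + 1"
    have n: "n > 0" by (simp add: n_def add_nonneg_pos)
    define t where "t = e / (2 * n)"
    have t: "t > 0" using e n by (simp add: t_def)
    have "norm (t *\<^sub>R v) \<le> t * n"
      using t by (simp add: n_def distrib_left)
    also have "\<dots> = e / 2"
      using n by (simp add: t_def)
    also have "\<dots> < e" using e by simp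
    finally have "c + t *\<^sub>R v \<in> S" "c \<in> S"
      using e by (auto simp: dist_norm)
    have "t *\<^sub>R f1 v = f1 (c + t *\<^sub>R v - x) - f1 (c - x)"
         "t *\<^sub>R f2 v = f2 (c + t *\<^sub>R v - x) - f2 (c - x)"
      by (simp_all flip: l1.diff l1.scaleR l2.diff l2.scaleR)
    with on_S[OF \<open>c + t *\<^sub>R v \<in> S\<close>] on_S[OF \<open>c \<in> S\<close>]
    have "t *\<^sub>R f1 v = t *\<^sub>R f2 v" by simp
    then show "f1 v = f2 v" using t by simp
  qed
qed

lemma frechet_derivative_within_convex:
  fixes f :: "'a::real_normed_vector \<Rightarrow> 'b::real_normed_vector"
  assumes "convex S" "interior S \<noteq> {}" "x \<in> S"
    and "(f has_derivative f') (at x within S)"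
  shows "frechet_derivative f (at x within S) = f'"
proof -
  have "f differentiable (at x within S)"
    using assms(4) by (rule differentiableI)
  then have "(f has_derivative frechet_derivative f (at x within S)) (at x within S)"
    by (rule frechet_derivative_works[THEN iffD1])
  then show ?thesis
    by (rule has_derivative_within_convex_unique[OF assms(1-3) _ assms(4)])
qed

lemma iter_pd_holomorphic:
  assumes S: "convex S" "interior S \<noteq> {}"
    and U: "open U" and h: "h holomorphic_on U" and z: "z \<in> S" "z \<in> U"
  shows "iter_pd ds S h z = prod_list ds * (deriv ^^ length ds) h z"
  using z
proof (induction ds arbitrary: z)
  case Nil
  then show ?case by simp
next
  case (Cons v ds)
  let ?Dh = "(deriv ^^ length ds) h"
  let ?c = "prod_list ds * deriv ?Dh z"
  obtain d where d: "d > 0" "ball z d \<subseteq> U"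
    using U Cons.prems(2) by (rule openE)
  have "(?Dh has_field_derivative deriv ?Dh z) (at z within S)"
    by (rule holomorphic_derivI[OF holomorphic_higher_deriv[OF h U] U Cons.prems(2)])
  then have "((\<lambda>w. prod_list ds * ?Dh w) has_field_derivative ?c) (at z within S)"
    by (rule DERIV_cmult)
  then have "(iter_pd ds S h has_derivative (\<lambda>v. ?c * v)) (at z within S)"
    unfolding has_field_derivative_def
  proof (rule has_derivative_transform_within[OF _ d(1) Cons.prems(1)])
    fix w assume "w \<in> S" "dist w z < d"
    then show "prod_list ds * ?Dh w = iter_pd ds S h w"
      using Cons.IH[of w] d(2) by (simp add: dist_commute subset_iff)
  qed
  from frechet_derivative_within_convex[OF S Cons.prems(1) this] show ?case
    by (simp add: dderiv_def)
qed

lemma smooth_on_set_holomorphic_UNIV: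
  assumes S: "convex S" "interior S \<noteq> {}" and h: "h holomorphic_on UNIV"
  shows "smooth_on_set S h"
  unfolding smooth_on_set_def
proof (intro allI impI ballI)
  fix ds :: "complex list" and z assume z: "z \<in> S"
  have "(\<lambda>w. prod_list ds * (deriv ^^ length ds) h w) holomorphic_on UNIV"
    using h by (intro holomorphic_intros holomorphic_higher_deriv) auto
  then have "(\<lambda>w. prod_list ds * (deriv ^^ length ds) h w) differentiable (at z within S)"
    by (meson UNIV_I differentiable_at_withinI field_differentiable_imp_differentiable
        holomorphic_on_imp_differentiable_at open_UNIV)
  then show "iter_pd ds S h differentiable (at z within S)"
    using iter_pd_holomorphic[OF S open_UNIV h] z
    by (elim differentiable_transform_within[of _ _ _ 1]) auto
qed

lemma iter_pd_diff:
  assumes S: "convex S" "interior S \<noteq> {}"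
    and f: "smooth_on_set S f" and h: "smooth_on_set S h"
    and ds: "set ds \<subseteq> {1, \<i>}" and z: "z \<in> S"
  shows "iter_pd ds S (\<lambda>w. f w - h w) z = iter_pd ds S f z - iter_pd ds S h z"
  using ds z
proof (induction ds arbitrary: z)
  case Nil
  then show ?case by simp
next
  case (Cons v ds)
  let ?F = "iter_pd ds S f" and ?H = "iter_pd ds S h"
  let ?D = "\<lambda>v. frechet_derivative ?F (at z within S) v - frechet_derivative ?H (at z within S) v"
  have "?F differentiable (at z within S)" "?H differentiable (at z within S)"
    using f h Cons.prems unfolding smooth_on_set_def by auto
  then have "((\<lambda>w. ?F w - ?H w) has_derivative ?D) (at z within S)"
    by (intro has_derivative_diff) (simp_all add: frechet_derivative_works)
  then have "(iter_pd ds S (\<lambda>w. f w - h w) has_derivative ?D) (at z within S)"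
    using Cons by (elim has_derivative_transform_within[of _ _ _ _ 1]) auto
  from frechet_derivative_within_convex[OF S Cons.prems(2) this] show ?case
    by (simp add: dderiv_def)
qed

lemma smooth_on_set_diff:
  assumes S: "convex S" "interior S \<noteq> {}"
    and f: "smooth_on_set S f" and h: "smooth_on_set S h"
  shows "smooth_on_set S (\<lambda>w. f w - h w)"
  unfolding smooth_on_set_def
proof (intro allI impI ballI)
  fix ds :: "complex list" and z assume ds: "set ds \<subseteq> {1, \<i>}" and z: "z \<in> S"
  have "(\<lambda>w. iter_pd ds S f w - iter_pd ds S h w) differentiable (at z within S)"
    using f h ds z unfolding smooth_on_set_def by (blast intro: differentiable_diff)
  then show "iter_pd ds S (\<lambda>w. f w - h w) differentiable (at z within S)"
    using iter_pd_diff[OF S f h ds] z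
    by (elim differentiable_transform_within[of _ _ _ 1]) auto
qed

lemma continuous_on_iter_pd:
  assumes "smooth_on_set S f" "set ds \<subseteq> {1, \<i>}"
  shows "continuous_on S (iter_pd ds S f)"
  using assms unfolding smooth_on_set_def
  by (auto simp: continuous_on_eq_continuous_within intro!: differentiable_imp_continuous_within)

lemma norm_prod_list_eq_1:
  fixes ds :: "'a::real_normed_div_algebra list"
  shows "(\<And>v. v \<in> set ds \<Longrightarrow> norm v = 1) \<Longrightarrow> norm (prod_list ds) = 1"
  by (induction ds) (auto simp: norm_mult)

lemma Ck_norm_le_higher_deriv_bound:
  fixes \<delta> :: real
  assumes S: "convex S" "closed S" "interior S \<noteq> {}"
    and f: "smooth_on_set S f" "f holomorphic_on interior S"
    and bound: "\<And>n z. n \<le> k \<Longrightarrow> z \<in> interior S \<Longrightarrow> norm ((deriv ^^ n) f z) \<le> \<delta>"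
  shows "Ck_norm k S f \<le> card {(a, b). a + b \<le> k} * \<delta>"
proof -
  have closure_interior: "closure (interior S) = S"
    using convex_closure_interior[OF S(1,3)] S(2) by simp
  have iter_pd_bound: "norm (iter_pd ds S f z) \<le> \<delta>"
    if ds: "set ds \<subseteq> {1, \<i>}" "length ds \<le> k" and z: "z \<in> S" for ds z
  proof (rule continuous_on_closure_norm_le[of "interior S" "iter_pd ds S f"])
    show "continuous_on (closure (interior S)) (iter_pd ds S f)"
      using continuous_on_iter_pd[OF f(1) ds(1)] closure_interior by simp
    show "z \<in> closure (interior S)"
      using z closure_interior by simp
    have "norm (prod_list ds) = 1"
      using ds(1) by (intro norm_prod_list_eq_1) auto
    moreover have "iter_pd ds S f y = prod_list ds * (deriv ^^ length ds) f y"
      if "y \<in> interior S" for y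
      using iter_pd_holomorphic[OF S(1,3) open_interior f(2)] that interior_subset by blast
    ultimately show "\<forall>y\<in>interior S. norm (iter_pd ds S f y) \<le> \<delta>"
      using bound ds(2) by (simp add: norm_mult)
  qed
  have "Ck_norm k S f \<le> (\<Sum>(a, b)\<in>{(a, b). a + b \<le> k}. \<delta>)"
    unfolding Ck_norm_def
  proof (rule sum_mono, clarify)
    fix a b assume "a + b \<le> k"
    then show "(SUP z\<in>S. norm (iter_pd (replicate a 1 @ replicate b \<i>) S f z)) \<le> \<delta>"
      using S(3) interior_subset by (auto intro!: cSUP_least iter_pd_bound)
  qed
  then show ?thesis by simp
qed

lemma uniform_limit_dilation_cball:
  fixes G :: "'a::{real_normed_vector, heine_borel} \<Rightarrow> 'b::metric_space"
  assumes G: "continuous_on (cball 0 1) G"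
  shows "uniform_limit (cball 0 1) (\<lambda>r x. G (r *\<^sub>R x)) G (at_left 1)"
proof (rule uniform_limitI)
  fix e :: real assume "e > 0"
  moreover have "uniformly_continuous_on (cball 0 1) G"
    using G by (rule compact_uniformly_continuous[OF _ compact_cball])
  ultimately obtain \<eta> where \<eta>: "\<eta> > 0"
    and uc: "\<And>x x'. x \<in> cball 0 1 \<Longrightarrow> x' \<in> cball 0 1 \<Longrightarrow> dist x' x < \<eta> \<Longrightarrow> dist (G x') (G x) < e"
    unfolding uniformly_continuous_on_def by metis
  have "eventually (\<lambda>r. r \<in> {max 0 (1 - \<eta>)<..<1}) (at_left (1::real))"
    using \<eta> by (intro eventually_at_left_real) auto
  then show "eventually (\<lambda>r. \<forall>x\<in>cball 0 1. dist (G (r *\<^sub>R x)) (G x) < e) (at_left 1)"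
  proof eventually_elim
    case (elim r)
    show ?case
    proof
      fix x :: 'a assume x: "x \<in> cball 0 1"
      then have rx: "r *\<^sub>R x \<in> cball 0 1"
        using elim by (simp add: mult_le_one)
      have "dist (r *\<^sub>R x) x = norm ((1 - r) *\<^sub>R x)"
        by (simp add: dist_norm norm_minus_commute scaleR_diff_left)
      also have "\<dots> \<le> 1 - r"
        using elim x by (simp add: mult_left_le)
      also have "\<dots> < \<eta>"
        using elim by simp
      finally show "dist (G (r *\<^sub>R x)) (G x) < e"
        using uc x rx by simp
    qed
  qed
qed

lemma uniform_limit_higher_deriv_dilation:
  assumes g: "smooth_on_set (cball 0 1) g" "g holomorphic_on ball 0 1"
  shows "uniform_limit (ball 0 1) (\<lambda>r. (deriv ^^ n) (\<lambda>w. g (of_real r * w))) ((deriv ^^ n) g)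
           (at_left 1)"
proof -
  define G where "G = iter_pd (replicate n 1) (cball 0 1) g"
  have contG: "continuous_on (cball 0 1) G"
    unfolding G_def by (rule continuous_on_iter_pd[OF g(1)]) auto
  have G_eq: "G z = (deriv ^^ n) g z" if "z \<in> ball 0 1" for z
    using iter_pd_holomorphic[OF convex_cball _ open_ball g(2)] that by (simp add: G_def)
  have "uniform_limit (ball 0 1) (\<lambda>r z. G (r *\<^sub>R z)) G (at_left 1)"
    using uniform_limit_dilation_cball[OF contG] ball_subset_cball by (rule uniform_limit_on_subset)
  moreover have "uniform_limit (ball 0 1) (\<lambda>r z. complex_of_real r ^ n) (\<lambda>z. 1) (at_left 1)"
  proof (rule uniform_limitI)
    fix e :: real assume "e > 0"
    moreover have "((\<lambda>r. complex_of_real r ^ n) \<longlongrightarrow> 1) (at_left 1)"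
      by (auto intro!: tendsto_eq_intros)
    ultimately show "eventually (\<lambda>r. \<forall>z\<in>ball 0 1. dist (complex_of_real r ^ n) 1 < e) (at_left 1)"
      by (auto dest: tendstoD)
  qed
  moreover have "bounded (G ` ball 0 1)"
    using compact_imp_bounded[OF compact_continuous_image[OF contG compact_cball]]
    by (rule bounded_subset) (auto intro: ball_subset_cball[THEN subsetD])
  ultimately have "uniform_limit (ball 0 1) (\<lambda>r z. complex_of_real r ^ n * G (r *\<^sub>R z))
      (\<lambda>z. 1 * G z) (at_left 1)"
    by (intro uniform_lim_mult) (auto intro: bounded_subset[of "{1}"])
  moreover have "eventually (\<lambda>r. \<forall>z\<in>ball 0 1.
      complex_of_real r ^ n * G (r *\<^sub>R z) = (deriv ^^ n) (\<lambda>w. g (of_real r * w)) z) (at_left 1)"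
    using eventually_at_left_real[OF zero_less_one]
  proof eventually_elim
    case (elim r)
    have dilate: "complex_of_real r * w \<in> ball 0 1" if "w \<in> ball 0 1" for w
      using elim that by (auto simp: norm_mult intro: le_less_trans[OF mult_left_le_one_le])
    show ?case
    proof
      fix z :: complex assume z: "z \<in> ball 0 1"
      have "(deriv ^^ n) (\<lambda>w. g (of_real r * w)) z = of_real r ^ n * (deriv ^^ n) g (of_real r * z)"
        by (rule higher_deriv_compose_linear[OF g(2) open_ball open_ball z dilate])
      then show "of_real r ^ n * G (r *\<^sub>R z) = (deriv ^^ n) (\<lambda>w. g (of_real r * w)) z"
        using G_eq[OF dilate[OF z]] by (simp add: scaleR_conv_of_real)
    qed
  qed
  ultimately have "uniform_limit (ball 0 1) (\<lambda>r. (deriv ^^ n) (\<lambda>w. g (of_real r * w))) G (at_left 1)"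
    by (simp add: uniform_limit_cong)
  then show ?thesis
    by (rule uniform_limit_cong'[THEN iffD1, rotated 2]) (simp_all add: G_eq)
qed

lemma nonconstant_poly_approx_holomorphic:
  assumes s: "s holomorphic_on ball 0 R" and \<rho>: "0 < \<rho>" "\<rho> < R" and \<eta>: "\<eta> > 0"
  shows "\<exists>p. degree p \<ge> 1 \<and> (\<forall>z\<in>cball 0 \<rho>. norm (poly p z - s z) < \<eta>)"
proof -
  define a where "a j = (deriv ^^ j) s 0 / fact j" for j
  have sums: "(\<lambda>j. a j * z ^ j) sums s z" if "z \<in> ball 0 R" for z
    using holomorphic_power_series[OF s that] by (simp add: a_def)
  define \<rho>' where "\<rho>' = (\<rho> + R) / 2"
  have \<rho>': "\<rho> < \<rho>'" "\<rho>' < R"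
    using \<rho> by (simp_all add: \<rho>'_def)
  then have "norm (complex_of_real \<rho>') = \<rho>'"
    using \<rho> by simp
  then have "norm (complex_of_real \<rho>') \<le> conv_radius a"
    by (intro conv_radius_geI sums_summable[OF sums]) (simp add: \<rho>'(2))
  then have "ereal \<rho> < conv_radius a"
    using \<rho>' by (auto elim!: less_le_trans[rotated])
  from powser_uniform_limit[OF this, of 0]
  have "uniform_limit (cball 0 \<rho>) (\<lambda>n z. \<Sum>j<n. a j * z ^ j) s sequentially"
  proof (rule uniform_limit_cong'[THEN iffD1, rotated 2])
    fix z :: complex assume "z \<in> cball 0 \<rho>"
    then have "z \<in> ball 0 R" using \<rho> by simp
    then show "(\<Sum>j. a j * (z - 0) ^ j) = s z"
      using sums by (simp add: sums_iff)
  qed simp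
  from uniform_limitD[OF this, of "\<eta> / 2"] \<eta>
  obtain N where "\<forall>n\<ge>N. \<forall>z\<in>cball 0 \<rho>. dist (\<Sum>j<n. a j * z ^ j) (s z) < \<eta> / 2"
    unfolding eventually_sequentially by auto
  then have N: "\<And>z. z \<in> cball 0 \<rho> \<Longrightarrow> dist (\<Sum>j<N. a j * z ^ j) (s z) < \<eta> / 2"
    by blast
  define d where "d = Suc N"
  define t where "t = \<eta> / (2 * \<rho> ^ d)"
  define p where "p = (\<Sum>j<N. monom (a j) j) + monom (complex_of_real t) d"
  have t: "t > 0" using \<eta> \<rho> by (simp add: t_def)
  have "coeff p d = complex_of_real t"
    by (simp add: p_def d_def coeff_sum coeff_monom)
  then have "d \<le> degree p"
    using t by (intro le_degree) simp
  moreover have "norm (poly p z - s z) < \<eta>" if z: "z \<in> cball 0 \<rho>" for z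
  proof -
    have "norm (complex_of_real t * z ^ d) = t * norm z ^ d"
      using t by (simp add: norm_mult norm_power)
    also have "\<dots> \<le> t * \<rho> ^ d"
      using z t by (intro mult_left_mono power_mono) auto
    also have "\<dots> = \<eta> / 2"
      using \<rho> by (simp add: t_def)
    finally have "norm (complex_of_real t * z ^ d) \<le> \<eta> / 2" .
    moreover have "poly p z - s z = ((\<Sum>j<N. a j * z ^ j) - s z) + complex_of_real t * z ^ d"
      by (simp add: p_def poly_sum poly_monom)
    then have "norm (poly p z - s z)
        \<le> norm ((\<Sum>j<N. a j * z ^ j) - s z) + norm (complex_of_real t * z ^ d)"
      by (metis norm_triangle_ineq)
    ultimately show ?thesis
      using N[OF z] by (simp add: dist_norm)
  qed
  ultimately show ?thesis
    by (intro exI[of _ p]) (simp add: d_def)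
qed

lemma poly_square_approx_nonvanishing:
  assumes f: "f holomorphic_on ball 0 R" "\<And>z. z \<in> ball 0 R \<Longrightarrow> f z \<noteq> 0"
    and \<rho>: "0 < \<rho>" "\<rho> < R" and \<epsilon>: "\<epsilon> > 0"
  shows "\<exists>q. degree q \<ge> 1 \<and> (\<forall>z\<in>cball 0 \<rho>. poly q z \<noteq> 0 \<and> norm (f z - poly q z ^ 2) < \<epsilon>)"
proof -
  obtain s where s: "s holomorphic_on ball 0 R" and fs: "\<And>z. z \<in> ball 0 R \<Longrightarrow> f z = s z ^ 2"
    using contractible_imp_holomorphic_sqrt[OF f(1) convex_imp_contractible[OF convex_ball] f(2)]
    by blast
  have sub: "cball 0 \<rho> \<subseteq> ball 0 R"
    using \<rho> by auto
  have cont: "continuous_on (cball 0 \<rho>) (\<lambda>z. norm (s z))"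
    using holomorphic_on_imp_continuous_on[OF s] sub
    by (auto intro: continuous_on_norm continuous_on_subset)
  obtain z0 where z0: "z0 \<in> cball 0 \<rho>" and min: "\<And>z. z \<in> cball 0 \<rho> \<Longrightarrow> norm (s z0) \<le> norm (s z)"
    using continuous_attains_inf[OF compact_cball _ cont] \<rho> by auto
  define m where "m = norm (s z0)"
  have "z0 \<in> ball 0 R"
    using z0 sub by blast
  then have "s z0 \<noteq> 0"
    using fs f(2) by force
  then have m: "m > 0"
    by (simp add: m_def)
  obtain B where B: "\<And>z. z \<in> cball 0 \<rho> \<Longrightarrow> norm (s z) \<le> B"
    using continuous_attains_sup[OF compact_cball _ cont] \<rho> by fastforce
  define \<eta> where "\<eta> = min m (\<epsilon> / (2 * B + m))"
  have "B \<ge> m"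
    using B[OF z0] by (simp add: m_def)
  then have Bm: "2 * B + m > 0"
    using m by linarith
  have "\<eta> \<le> \<epsilon> / (2 * B + m)"
    by (simp add: \<eta>_def)
  then have "\<eta> * (2 * B + m) \<le> \<epsilon>"
    using Bm by (simp add: pos_le_divide_eq)
  moreover have "\<eta> > 0" "\<eta> \<le> m"
    using m \<epsilon> Bm by (simp_all add: \<eta>_def)
  ultimately have \<eta>: "\<eta> > 0" "\<eta> \<le> m" "\<eta> * (2 * B + m) \<le> \<epsilon>"
    by auto
  obtain q where q: "degree q \<ge> 1" and close: "\<And>z. z \<in> cball 0 \<rho> \<Longrightarrow> norm (poly q z - s z) < \<eta>"
    using nonconstant_poly_approx_holomorphic[OF s \<rho> \<eta>(1)] by blast
  have "poly q z \<noteq> 0 \<and> norm (f z - poly q z ^ 2) < \<epsilon>" if z: "z \<in> cball 0 \<rho>" for z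
  proof
    show "poly q z \<noteq> 0"
      using close[OF z] min[OF z] \<eta>(2) by (auto simp: m_def)
    have "s z + poly q z = 2 * s z + (poly q z - s z)"
      by simp
    then have "norm (s z + poly q z) \<le> norm (2 * s z) + norm (poly q z - s z)"
      by (simp only: norm_triangle_ineq)
    also have "\<dots> \<le> 2 * B + m"
      using B[OF z] close[OF z] \<eta>(2) by (simp add: norm_mult)
    finally have "norm (s z + poly q z) \<le> 2 * B + m" .
    moreover have "f z = s z ^ 2"
      using z sub by (intro fs) blast
    then have "f z - poly q z ^ 2 = (s z - poly q z) * (s z + poly q z)"
      by (simp add: power2_eq_square algebra_simps)
    ultimately have "norm (f z - poly q z ^ 2) \<le> norm (poly q z - s z) * (2 * B + m)"
      by (simp add: norm_mult norm_minus_commute mult_left_mono)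
    also have "\<dots> < \<eta> * (2 * B + m)"
      using close[OF z] Bm by simp
    finally show "norm (f z - poly q z ^ 2) < \<epsilon>"
      using \<eta>(3) by simp
  qed
  with q show ?thesis by blast
qed

lemma norm_higher_deriv_le_Cauchy:
  assumes "E holomorphic_on ball z r" "continuous_on (cball z r) E" "r > 0"
    and "\<And>w. w \<in> ball z r \<Longrightarrow> norm (E w) < B"
  shows "norm ((deriv ^^ n) E z) \<le> fact n * B / r ^ n"
proof (cases "n = 0")
  case True
  then show ?thesis
    using assms(4)[of z] assms(3) by simp
next
  case False
  then show ?thesis
    using assms by (intro Cauchy_higher_deriv_bound[where y = 0]) auto
qed

lemma poly_square_approx_higher_deriv:
  assumes f: "f holomorphic_on ball 0 R" "\<And>z. z \<in> ball 0 R \<Longrightarrow> f z \<noteq> 0"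
    and R: "R > 1" and \<epsilon>: "\<epsilon> > 0"
  shows "\<exists>q. degree q \<ge> 1 \<and> (\<forall>z\<in>cball 0 1. poly q z \<noteq> 0) \<and>
           (\<forall>n\<le>k. \<forall>z\<in>ball 0 1.
              norm ((deriv ^^ n) f z - (deriv ^^ n) (\<lambda>w. poly q w ^ 2) z) \<le> \<epsilon>)"
proof -
  define \<rho> where "\<rho> = (1 + R) / 2"
  have \<rho>: "1 < \<rho>" "\<rho> < R"
    using R by (simp_all add: \<rho>_def)
  define \<epsilon>1 where "\<epsilon>1 = Min ((\<lambda>n. \<epsilon> * (\<rho> - 1) ^ n / fact n) ` {..k})"
  have "\<epsilon>1 > 0"
    using \<epsilon> \<rho> by (simp add: \<epsilon>1_def)
  then obtain q where q: "degree q \<ge> 1"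
    and q_approx: "\<And>z. z \<in> cball 0 \<rho> \<Longrightarrow> poly q z \<noteq> 0 \<and> norm (f z - poly q z ^ 2) < \<epsilon>1"
    using poly_square_approx_nonvanishing[OF f _ \<rho>(2)] \<rho>(1) by (meson less_trans zero_less_one)
  have "norm ((deriv ^^ n) f z - (deriv ^^ n) (\<lambda>w. poly q w ^ 2) z) \<le> \<epsilon>"
    if n: "n \<le> k" and z: "z \<in> ball 0 1" for n z
  proof -
    define E where "E w = f w - poly q w ^ 2" for w
    have holQ: "(\<lambda>w. poly q w ^ 2) holomorphic_on ball 0 R"
      using poly_holomorphic_on[OF holomorphic_on_id, of q "ball 0 R"]
      by (intro holomorphic_on_power) simp
    have holE: "E holomorphic_on ball 0 R"
      unfolding E_def by (intro holomorphic_on_diff f(1) holQ)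
    have near: "cball z (\<rho> - 1) \<subseteq> cball 0 \<rho>"
    proof
      fix w assume "w \<in> cball z (\<rho> - 1)"
      then have "norm (w - z) \<le> \<rho> - 1"
        by (simp add: dist_norm norm_minus_commute)
      then show "w \<in> cball 0 \<rho>"
        using z norm_triangle_sub[of w z] by simp
    qed
    also have "\<dots> \<subseteq> ball 0 R"
      using \<rho> by auto
    finally have sub: "cball z (\<rho> - 1) \<subseteq> ball 0 R" .
    have "(deriv ^^ n) E z = (deriv ^^ n) f z - (deriv ^^ n) (\<lambda>w. poly q w ^ 2) z"
      unfolding E_def
      by (rule higher_deriv_diff[OF f(1) holQ open_ball]) (use z R in simp)
    moreover have "norm ((deriv ^^ n) E z) \<le> fact n * \<epsilon>1 / (\<rho> - 1) ^ n"
    proof (rule norm_higher_deriv_le_Cauchy)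
      show "E holomorphic_on ball z (\<rho> - 1)"
        by (rule holomorphic_on_subset[OF holE]) (use sub ball_subset_cball in blast)
      show "continuous_on (cball z (\<rho> - 1)) E"
        by (rule continuous_on_subset[OF holomorphic_on_imp_continuous_on[OF holE] sub])
      show "norm (E w) < \<epsilon>1" if "w \<in> ball z (\<rho> - 1)" for w
      proof -
        have "w \<in> cball 0 \<rho>"
          using that near ball_subset_cball by blast
        then show ?thesis
          using q_approx by (simp add: E_def)
      qed
    qed (use \<rho> in simp)
    moreover have "\<epsilon>1 \<le> \<epsilon> * (\<rho> - 1) ^ n / fact n"
      unfolding \<epsilon>1_def using n by (intro Min_le) auto
    then have "fact n * \<epsilon>1 / (\<rho> - 1) ^ n \<le> \<epsilon>"
      using \<rho> by (simp add: field_simps)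
    ultimately show ?thesis
      by simp
  qed
  moreover have "poly q z \<noteq> 0" if "z \<in> cball 0 1" for z
    using q_approx that \<rho> by simp
  ultimately show ?thesis
    using q by blast
qed

lemma poly_square_approx_higher_deriv_disc:
  assumes g: "smooth_on_set (cball 0 1) g" "g holomorphic_on ball 0 1"
    and nonzero: "\<And>z. z \<in> ball 0 1 \<Longrightarrow> g z \<noteq> 0" and \<epsilon>: "\<epsilon> > 0"
  shows "\<exists>q. degree q \<ge> 1 \<and> (\<forall>z\<in>cball 0 1. poly q z \<noteq> 0) \<and>
           (\<forall>n\<le>k. \<forall>z\<in>ball 0 1.
              norm ((deriv ^^ n) g z - (deriv ^^ n) (\<lambda>w. poly q w ^ 2) z) \<le> \<epsilon>)"
proof -
  have "\<forall>n\<in>{..k}. eventually (\<lambda>r. \<forall>z\<in>ball 0 1.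
      dist ((deriv ^^ n) (\<lambda>w. g (of_real r * w)) z) ((deriv ^^ n) g z) < \<epsilon> / 2) (at_left 1)"
    using uniform_limitD[OF uniform_limit_higher_deriv_dilation[OF g(1,2)] half_gt_zero[OF \<epsilon>]]
    by blast
  then have "eventually (\<lambda>r. \<forall>n\<in>{..k}. \<forall>z\<in>ball 0 1.
      dist ((deriv ^^ n) (\<lambda>w. g (of_real r * w)) z) ((deriv ^^ n) g z) < \<epsilon> / 2) (at_left 1)"
    by (rule eventually_ball_finite[OF finite_atMost])
  moreover have "eventually (\<lambda>r. r \<in> {0<..<1}) (at_left (1::real))"
    by (rule eventually_at_left_real) simp
  ultimately obtain r where close: "\<forall>n\<in>{..k}. \<forall>z\<in>ball 0 1.
      dist ((deriv ^^ n) (\<lambda>w. g (of_real r * w)) z) ((deriv ^^ n) g z) < \<epsilon> / 2"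
    and r: "r \<in> {0<..<1}"
    using eventually_happens'[OF trivial_limit_at_left_real eventually_conj] by blast
  define f where "f = (\<lambda>w. g (of_real r * w))"
  have dilate: "of_real r * w \<in> ball 0 1" if "w \<in> ball 0 (1 / r)" for w :: complex
    using that r by (simp add: norm_mult field_simps)
  have "(g \<circ> (\<lambda>w. of_real r * w)) holomorphic_on ball 0 (1 / r)"
    by (rule holomorphic_on_compose_gen[OF _ g(2)]) (use dilate in \<open>auto intro: holomorphic_intros\<close>)
  then have "f holomorphic_on ball 0 (1 / r)"
    by (simp add: f_def o_def)
  moreover have "f w \<noteq> 0" if "w \<in> ball 0 (1 / r)" for w
    using nonzero dilate that by (simp add: f_def)
  ultimately obtain q where q: "degree q \<ge> 1" "\<forall>z\<in>cball 0 1. poly q z \<noteq> 0"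
    and approx: "\<forall>n\<le>k. \<forall>z\<in>ball 0 1.
        norm ((deriv ^^ n) f z - (deriv ^^ n) (\<lambda>w. poly q w ^ 2) z) \<le> \<epsilon> / 2"
    using poly_square_approx_higher_deriv[of f "1 / r" "\<epsilon> / 2" k] r \<epsilon>
    by (auto simp del: One_nat_def)
  have "norm ((deriv ^^ n) g z - (deriv ^^ n) (\<lambda>w. poly q w ^ 2) z) \<le> \<epsilon>"
    if "n \<le> k" "z \<in> ball 0 1" for n z
  proof -
    let ?F = "(deriv ^^ n) f z" and ?G = "(deriv ^^ n) g z"
      and ?Q = "(deriv ^^ n) (\<lambda>w. poly q w ^ 2) z"
    have "norm (?G - ?Q) = norm ((?F - ?Q) - (?F - ?G))"
      by simp
    also have "\<dots> \<le> dist ?F ?G + norm (?F - ?Q)"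
      using norm_triangle_ineq4[of "?F - ?Q" "?F - ?G"] by (simp add: dist_norm)
    also have "\<dots> \<le> \<epsilon> / 2 + \<epsilon> / 2"
    proof (rule add_mono)
      show "dist ?F ?G \<le> \<epsilon> / 2"
        using close that unfolding f_def by (simp add: less_imp_le)
      show "norm (?F - ?Q) \<le> \<epsilon> / 2"
        using approx that by simp
    qed
    finally show ?thesis by simp
  qed
  with q show ?thesis by blast
qed

lemma poly_power_eq_prod_roots_outside_disc:
  fixes q :: "complex poly"
  assumes "degree q \<ge> 1" and nonzero: "\<forall>z\<in>cball 0 1. poly q z \<noteq> 0"
  shows "\<exists>(M::nat) (\<alpha>0::complex) (\<alpha>::nat \<Rightarrow> complex) (N::nat \<Rightarrow> nat). M > 0 \<and>
           (\<forall>i\<in>{1..M}. norm (\<alpha> i) > 1 \<and> N i \<ge> 1) \<and>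
           (\<forall>z. poly q z ^ m = \<alpha>0 * (\<Prod>i=1..M. (z - \<alpha> i) ^ (m * N i)))"
proof -
  obtain root where decompose: "smult (lead_coeff q) (\<Prod>i<degree q. [:-root i, 1:]) = q"
    by (rule complex_poly_decompose')
  have q_eq: "poly q z = lead_coeff q * (\<Prod>i<degree q. z - root i)" for z
    by (subst decompose[symmetric]) (simp add: poly_prod)
  have "norm (root i) > 1" if "i < degree q" for i
  proof -
    have "poly q (root i) = 0"
      using that by (auto simp: q_eq prod_zero_iff)
    then show ?thesis
      using nonzero by (auto simp: not_le)
  qed
  moreover have "poly q z ^ m = lead_coeff q ^ m * (\<Prod>i=1..degree q. (z - root (i - 1)) ^ (m * 1))" for z
    by (simp add: q_eq power_mult_distrib prod_power_distrib prod.atLeast1_atMost_eq)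
  ultimately show ?thesis
    using assms(1)
    by (intro exI[of _ "degree q"] exI[of _ "lead_coeff q ^ m"] exI[of _ "\<lambda>i. root (i - 1)"]
        exI[of _ "\<lambda>_. 1"]) auto
qed

lemma Ck_norm_disc_diff_le:
  fixes \<delta> :: real
  assumes g: "smooth_on_set (cball 0 1) g" "g holomorphic_on ball 0 1"
    and P: "P holomorphic_on UNIV"
    and bound: "\<And>n z. n \<le> k \<Longrightarrow> z \<in> ball 0 1 \<Longrightarrow> norm ((deriv ^^ n) g z - (deriv ^^ n) P z) \<le> \<delta>"
  shows "Ck_norm k (cball 0 1) (\<lambda>z. g z - P z) \<le> card {(a, b). a + b \<le> k} * \<delta>"
proof (rule Ck_norm_le_higher_deriv_bound)
  have "smooth_on_set (cball 0 1) P"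
    using P by (intro smooth_on_set_holomorphic_UNIV) auto
  then show "smooth_on_set (cball 0 1) (\<lambda>z. g z - P z)"
    using g(1) by (intro smooth_on_set_diff) auto
  have P_ball: "P holomorphic_on ball 0 1"
    using P by (rule holomorphic_on_subset) simp
  then show "(\<lambda>z. g z - P z) holomorphic_on interior (cball 0 1)"
    using g(2) by (simp add: holomorphic_on_diff)
  show "norm ((deriv ^^ n) (\<lambda>z. g z - P z) z) \<le> \<delta>"
    if "n \<le> k" "z \<in> interior (cball 0 1)" for n z
    using higher_deriv_diff[OF g(2) P_ball open_ball] bound that by simp
qed auto

theorem lemma2p1:
  fixes g :: "complex \<Rightarrow> complex" and \<epsilon>0 :: real and k :: nat
  assumes "smooth_on_set (cball 0 1) g"
    and "g analytic_on ball 0 1"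
    and "\<forall>z\<in>cball 0 1. norm (g z) > 0"
    and "\<epsilon>0 > 0" and "k > 0"
  shows "\<exists>(M::nat) (\<alpha>0::complex) (\<alpha>::nat \<Rightarrow> complex) (N::nat \<Rightarrow> nat). M > 0 \<and>
           (\<forall>i\<in>{1..M}. norm (\<alpha> i) > 1 \<and> N i \<ge> 1) \<and>
           Ck_norm k (cball 0 1) (\<lambda>z. g z - \<alpha>0 * (\<Prod>i=1..M. (z - \<alpha> i) ^ (2 * N i))) < \<epsilon>0"
proof -
  define \<delta> where "\<delta> = \<epsilon>0 / (card {(a, b). a + b \<le> k} + 1)"
  have \<delta>: "\<delta> > 0" and "card {(a, b). a + b \<le> k} * \<delta> < \<epsilon>0"
    using assms(4) by (simp_all add: \<delta>_def field_simps)
  have holg: "g holomorphic_on ball 0 1"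
    using assms(2) by (rule analytic_imp_holomorphic)
  have nonzero: "g z \<noteq> 0" if "z \<in> ball 0 1" for z
    using assms(3) that by fastforce
  obtain q where q: "degree q \<ge> 1" "\<forall>z\<in>cball 0 1. poly q z \<noteq> 0"
    and approx: "\<forall>n\<le>k. \<forall>z\<in>ball 0 1.
        norm ((deriv ^^ n) g z - (deriv ^^ n) (\<lambda>w. poly q w ^ 2) z) \<le> \<delta>"
    using poly_square_approx_higher_deriv_disc[OF assms(1) holg nonzero \<delta>] by blast
  obtain M :: nat and \<alpha>0 \<alpha> and N :: "nat \<Rightarrow> nat"
    where factors: "M > 0" "\<forall>i\<in>{1..M}. norm (\<alpha> i) > 1 \<and> N i \<ge> 1"
    and q_square: "\<forall>z. poly q z ^ 2 = \<alpha>0 * (\<Prod>i=1..M. (z - \<alpha> i) ^ (2 * N i))"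
    using poly_power_eq_prod_roots_outside_disc[OF q, of 2] by blast
  have "(\<lambda>w. poly q w ^ 2) holomorphic_on UNIV"
    using poly_holomorphic_on[OF holomorphic_on_id, of q UNIV] by (intro holomorphic_on_power) simp
  then have "Ck_norm k (cball 0 1) (\<lambda>z. g z - poly q z ^ 2) \<le> card {(a, b). a + b \<le> k} * \<delta>"
    using approx by (intro Ck_norm_disc_diff_le[OF assms(1) holg]) auto
  also have "\<dots> < \<epsilon>0"
    by fact
  finally show ?thesis
    using factors q_square by (intro exI[of _ M] exI[of _ \<alpha>0] exI[of _ \<alpha>] exI[of _ N]) simp
qed

end
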